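(* Let the sites of $S$ have independent uniformly random positions in $\mathbb T^d$, let $k\ge2$ be fixed and $A\subseteq S$ with $|A|=k$. There is a constant $c$ depending only on $k,d,\mathfrak p$ such that $$\Pr[A\text{ is relevant}]\le c\,\frac{\prod_{s_i\in A}w_i}{\left(\sum_{s_i\notin A}w_i\right)^{k-1}}.$$
   Context: Sites $S=\{s_1,\dots,s_n\}$ lie in $\mathbb T^d$ ($[0,1]^d$ with opposite faces identified) with distance $\mathrm{dist}(p,q)=\left(\sum_{i}|p_i-q_i|_\circ^{\mathfrak p}\right)^{1/\mathfrak p}$ ($\max$ for $\mathfrak p=\infty$), $|a-b|_\circ=\min\{|a-b|,1-|a-b|\}$. Site $s_i$ has weight $w_i\ge1$ and $\omega_i=w_i^{1/d}$. For $A=\{s_1,\dots,s_k\}$ indexed so that $s_1$ has minimum weight in $A$, define $R_A=\max_{i\in[k]}\frac{\mathrm{dist}(s_1,s_i)}{\omega_1+\omega_i}$. $A$ is relevant if there exist a point $p\in\mathbb T^d$ and a radius $r\ge R_A$ with $\mathrm{dist}(s_1,p)\le\omega_1 r$ and $\mathrm{dist}(s_i,p)>\omega_i r$ for all $s_i\notin A$. *)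

theory Defs
  imports "HOL-Analysis.Analysis"
begin

text \<open>Points of the torus T^d are represented by their representatives in [0,1)^d,
  with the dimension d given by the finite index type 'd (d = CARD('d)).\<close>

definition unit_cube :: "(real ^ 'd) set" where
  "unit_cube = {x. \<forall>j. 0 \<le> x $ j \<and> x $ j < 1}"

definition circ_dist :: "real \<Rightarrow> real \<Rightarrow> real" where
  "circ_dist a b = min \<bar>a - b\<bar> (1 - \<bar>a - b\<bar>)"

definition tdist :: "ennreal \<Rightarrow> real ^ 'd \<Rightarrow> real ^ 'd \<Rightarrow> real" where
  "tdist p x y =
     (if p = \<infinity> then Max (range (\<lambda>i. circ_dist (x $ i) (y $ i)))
      else (\<Sum>i\<in>UNIV. circ_dist (x $ i) (y $ i) powr enn2real p) powr (1 / enn2real p))"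

definition omega :: "'d itself \<Rightarrow> (nat \<Rightarrow> real) \<Rightarrow> nat \<Rightarrow> real" where
  "omega _ w i = w i powr (1 / real CARD('d))"

definition minsite :: "(nat \<Rightarrow> real) \<Rightarrow> nat set \<Rightarrow> nat" where
  "minsite w A = (LEAST i. i \<in> A \<and> (\<forall>j\<in>A. w i \<le> w j))"

definition R_A :: "ennreal \<Rightarrow> (nat \<Rightarrow> real) \<Rightarrow> (nat \<Rightarrow> real ^ 'd) \<Rightarrow> nat set \<Rightarrow> real" where
  "R_A p w x A = (let a = minsite w A in
      Max ((\<lambda>i. tdist p (x a) (x i) / (omega TYPE('d) w a + omega TYPE('d) w i)) ` A))"

text \<open>Sites are indexed by {..<n}; x i is the position of site s_i.\<close>
definition relevant :: "ennreal \<Rightarrow> nat \<Rightarrow> (nat \<Rightarrow> real) \<Rightarrow> (nat \<Rightarrow> real ^ 'd) \<Rightarrow> nat set \<Rightarrow> bool" where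
  "relevant p n w x A = (let a = minsite w A in
     \<exists>q\<in>unit_cube. \<exists>r. r \<ge> R_A p w x A \<and>
        tdist p (x a) q \<le> omega TYPE('d) w a * r \<and>
        (\<forall>i\<in>{..<n} - A. tdist p (x i) q > omega TYPE('d) w i * r))"

definition site_space :: "nat \<Rightarrow> (nat \<Rightarrow> real ^ 'd) measure" where
  "site_space n = PiM {..<n} (\<lambda>_. uniform_measure lborel unit_cube)"

end

theory Submission
  imports Defs "HOL-Probability.Probability"
begin

text \<open>
  Measure all distances in the l_\<infinity> torus metric, which is equivalent to the l_p one up to the
  factor d. If A is relevant with witness point q and radius r, every site s of A lies within
  about 3 \<omega>_s r of q, every other site s' lies beyond \<omega>_s' r / d, and r < d. Snap q to the grid
  of spacing h = 2^-(m+2) for the dyadic scale with r \<approx> d h: for a fixed grid point g the sites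
  of A fall into torus balls of volume O(w_s h^d), and unless r is below the finest scale used
  each other site s' misses a ball of volume w_s' h^d, which happens with probability at most
  exp (- w_s' h^d). Summing over the h^-d grid points gives
  O(\<Prod>_A w \<cdot> h^(d(k-1)) \<cdot> exp (- W h^d)) with W the weight outside A, i.e.
  (\<Prod>_A w / W^(k-1)) \<cdot> t^(k-1) e^-t with t = W h^d. On the scales coarser than the first one with
  t \<le> 1 the values of t grow geometrically, so the sum over all scales is O_(k,d)(1).
\<close>

section \<open>The l_\<infinity> torus distance and a grid\<close>

lemma circ_dist_nonneg: "\<bar>a - b\<bar> \<le> 1 \<Longrightarrow> 0 \<le> circ_dist a b"
  by (simp add: circ_dist_def)

lemma circ_dist_le_half: "circ_dist a b \<le> 1/2"
  by (simp add: circ_dist_def min_def)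

lemma circ_dist_le_abs: "circ_dist a b \<le> \<bar>a - b\<bar>"
  by (simp add: circ_dist_def)

lemma circ_dist_commute: "circ_dist a b = circ_dist b a"
  by (simp add: circ_dist_def abs_minus_commute)

lemma circ_dist_triangle:
  assumes "a \<in> {0..<1}" "b \<in> {0..<1}" "c \<in> {0..<1}"
  shows "circ_dist a c \<le> circ_dist a b + circ_dist b c"
  using assms unfolding circ_dist_def min_def by (auto simp: abs_if split: if_splits)

lemma circ_dist_le_imp_shift:
  assumes "a \<in> {0..<1}" "b \<in> {0..<1}" "circ_dist a b \<le> s"
  shows "\<exists>t\<in>{-1, 0, 1::real}. \<bar>a - (b + t)\<bar> \<le> s"
  using assms unfolding circ_dist_def min_def by (auto simp: abs_if split: if_splits)

lemma tdist_infinity: "tdist \<infinity> x y = Max (range (\<lambda>i. circ_dist (x $ i) (y $ i)))"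
  by (simp add: tdist_def)

lemma tdist_infinity_le_iff: "tdist \<infinity> x y \<le> s \<longleftrightarrow> (\<forall>i. circ_dist (x $ i) (y $ i) \<le> s)"
  unfolding tdist_infinity by (subst Max_le_iff) auto

lemma circ_dist_le_tdist_infinity: "circ_dist (x $ i) (y $ i) \<le> tdist \<infinity> x y"
  unfolding tdist_infinity by (rule Max_ge) auto

lemma tdist_infinity_attained: "\<exists>i. tdist \<infinity> x y = circ_dist (x $ i) (y $ i)"
proof -
  have "tdist \<infinity> x y \<in> range (\<lambda>i. circ_dist (x $ i) (y $ i))"
    unfolding tdist_infinity by (rule Max_in) auto
  then show ?thesis by auto
qed

lemma tdist_infinity_le_half: "tdist \<infinity> x y \<le> 1/2"
  unfolding tdist_infinity_le_iff using circ_dist_le_half by blast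

lemma tdist_infinity_commute: "tdist \<infinity> x y = tdist \<infinity> y x"
  unfolding tdist_infinity by (simp add: circ_dist_commute)

lemma unit_cube_nth: "x \<in> unit_cube \<Longrightarrow> x $ i \<in> {0..<1}"
  by (simp add: unit_cube_def)

lemma tdist_infinity_triangle:
  assumes "x \<in> unit_cube" "y \<in> unit_cube" "z \<in> unit_cube"
  shows "tdist \<infinity> x z \<le> tdist \<infinity> x y + tdist \<infinity> y z"
  unfolding tdist_infinity_le_iff[of x z]
proof
  fix i
  have "circ_dist (x $ i) (z $ i) \<le> circ_dist (x $ i) (y $ i) + circ_dist (y $ i) (z $ i)"
    using assms by (intro circ_dist_triangle unit_cube_nth)
  also have "\<dots> \<le> tdist \<infinity> x y + tdist \<infinity> y z"
    by (intro add_mono circ_dist_le_tdist_infinity)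
  finally show "circ_dist (x $ i) (z $ i) \<le> tdist \<infinity> x y + tdist \<infinity> y z" .
qed

lemma circ_dist_nth_nonneg: "x \<in> unit_cube \<Longrightarrow> y \<in> unit_cube \<Longrightarrow> 0 \<le> circ_dist (x $ i) (y $ i)"
  by (intro circ_dist_nonneg) (auto simp: unit_cube_def abs_le_iff dest!: spec[of _ i])

lemma tdist_infinity_nonneg: "x \<in> unit_cube \<Longrightarrow> y \<in> unit_cube \<Longrightarrow> 0 \<le> tdist \<infinity> x y"
  using circ_dist_nth_nonneg circ_dist_le_tdist_infinity order_trans by blast

lemma tdist_equiv_tdist_infinity:
  fixes x y :: "real ^ 'd"
  assumes "x \<in> unit_cube" "y \<in> unit_cube" "p \<ge> 1"
  shows "tdist \<infinity> x y \<le> tdist p x y \<and> tdist p x y \<le> real CARD('d) * tdist \<infinity> x y"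
proof (cases "p = \<infinity>")
  case True
  then show ?thesis
    using tdist_infinity_nonneg[OF assms(1,2)] by (simp add: mult_le_cancel_right1)
next
  case False
  define P where "P = enn2real p"
  have P1: "P \<ge> 1"
    using assms(3) False unfolding P_def
    by (metis enn2real_1 enn2real_mono infinity_ennreal_def top.not_eq_extremum)
  define c where "c i = circ_dist (x $ i) (y $ i)" for i
  have c0: "0 \<le> c i" for i
    unfolding c_def using assms(1,2) by (rule circ_dist_nth_nonneg)
  have T: "tdist p x y = (\<Sum>i\<in>UNIV. c i powr P) powr (1/P)"
    unfolding tdist_def c_def P_def using False by simp
  obtain j where j: "tdist \<infinity> x y = c j"
    using tdist_infinity_attained c_def by metis
  have cj: "c i \<le> c j" for i
    using circ_dist_le_tdist_infinity[of x i y] j c_def by simp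
  have "c j = (c j powr P) powr (1/P)"
    using P1 c0[of j] by (simp add: powr_powr)
  also have "\<dots> \<le> (\<Sum>i\<in>UNIV. c i powr P) powr (1/P)"
    using P1 c0 by (intro powr_mono2) (auto intro!: member_le_sum)
  finally have lower: "tdist \<infinity> x y \<le> tdist p x y"
    using T j by simp
  have "(\<Sum>i\<in>UNIV. c i powr P) \<le> real CARD('d) * c j powr P"
    using sum_mono[of UNIV "\<lambda>i. c i powr P" "\<lambda>_. c j powr P"] P1 c0 cj
    by (simp add: powr_mono2)
  then have "tdist p x y \<le> (real CARD('d) * c j powr P) powr (1/P)"
    unfolding T using P1 c0 by (intro powr_mono2) (auto intro!: sum_nonneg)
  also have "\<dots> = real CARD('d) powr (1/P) * c j"
    using P1 c0[of j] by (simp add: powr_mult powr_powr)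
  also have "\<dots> \<le> real CARD('d) * c j"
    using P1 c0[of j] powr_mono[of "1/P" 1 "real CARD('d)"] by (intro mult_right_mono) auto
  finally show ?thesis
    using lower j by simp
qed

definition grid :: "nat \<Rightarrow> (real ^ 'd) set" where
  "grid N = (\<lambda>f. \<chi> i. real (f i) / real N) ` (UNIV \<rightarrow>\<^sub>E {..<N})"

lemma finite_grid: "finite (grid N)"
  unfolding grid_def by (intro finite_imageI finite_PiE) auto

lemma card_grid_le: "card (grid N :: (real ^ 'd) set) \<le> N ^ CARD('d)"
  unfolding grid_def
  by (rule order_trans[OF card_image_le]) (auto simp: card_PiE intro!: finite_PiE)

lemma grid_subset_unit_cube: "N > 0 \<Longrightarrow> grid N \<subseteq> unit_cube"
  unfolding grid_def unit_cube_def by (auto simp: PiE_iff)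

lemma grid_approx:
  fixes q :: "real ^ 'd"
  assumes "q \<in> unit_cube" "N > 0"
  shows "\<exists>g\<in>grid N. tdist \<infinity> q g \<le> 1 / real N"
proof -
  define f where "f i = nat \<lfloor>q $ i * N\<rfloor>" for i
  have q: "0 \<le> q $ i" "q $ i < 1" for i
    using assms(1) by (auto simp: unit_cube_def)
  have "f i < N" for i
    unfolding f_def using q[of i] assms(2) by (simp add: nat_less_iff floor_less_iff)
  then have "(\<chi> i. real (f i) / real N) \<in> grid N"
    unfolding grid_def by (intro imageI) auto
  moreover have "tdist \<infinity> q (\<chi> i. real (f i) / real N) \<le> 1 / real N"
    unfolding tdist_infinity_le_iff
  proof
    fix i
    have "0 \<le> \<lfloor>q $ i * N\<rfloor>"
      using q[of i] by simp
    then have "real (f i) \<le> q $ i * N" "q $ i * N < real (f i) + 1"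
      unfolding f_def by linarith+
    moreover have "q $ i - real (f i) / real N = (q $ i * N - real (f i)) / real N"
      using assms(2) by (simp add: field_simps)
    ultimately have "\<bar>q $ i - real (f i) / real N\<bar> \<le> 1 / real N"
      using assms(2) by (simp add: divide_right_mono)
    then show "circ_dist (q $ i) ((\<chi> i. real (f i) / real N) $ i) \<le> 1 / real N"
      using circ_dist_le_abs[of "q $ i" "real (f i) / real N"] by simp
  qed
  ultimately show ?thesis by blast
qed

section \<open>Torus balls under the uniform measure\<close>

definition torus_cball :: "real ^ 'd \<Rightarrow> real \<Rightarrow> (real ^ 'd) set" where
  "torus_cball g s = {y \<in> unit_cube. tdist \<infinity> y g \<le> s}"

lemma vec_nth_borel_measurable[measurable]: "(\<lambda>x::real ^ 'n. x $ j) \<in> borel_measurable borel"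
  by (intro borel_measurable_continuous_onI linear_continuous_on bounded_linear_vec_nth)

lemma sets_unit_cube[measurable]: "unit_cube \<in> sets borel"
  unfolding unit_cube_def by measurable

lemma sets_torus_cball[measurable]: "torus_cball g s \<in> sets borel"
proof -
  have "torus_cball g s = unit_cube \<inter> (\<Inter>i. {y. min \<bar>y $ i - g $ i\<bar> (1 - \<bar>y $ i - g $ i\<bar>) \<le> s})"
    unfolding torus_cball_def tdist_infinity_le_iff circ_dist_def by auto
  also have "\<dots> \<in> sets borel" by measurable
  finally show ?thesis .
qed

lemma measure_lborel_cbox_cart:
  fixes a b :: "real ^ 'd"
  assumes "\<forall>i. a $ i \<le> b $ i"
  shows "measure lborel (cbox a b) = (\<Prod>i\<in>UNIV. b $ i - a $ i)"
proof -
  have "a \<in> cbox a b"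
    using assms by (auto simp: mem_box_cart)
  then show ?thesis
    using content_cbox_cart by blast
qed

lemma fmeasurable_cbox: "cbox a b \<in> fmeasurable lborel"
  unfolding fmeasurable_def using emeasure_lborel_cbox_finite by auto

lemma measure_unit_cube: "measure lborel (unit_cube :: (real ^ 'd) set) = 1"
proof (rule antisym)
  have box: "box 0 1 \<subseteq> unit_cube" "unit_cube \<subseteq> cbox (0::real ^ 'd) 1"
    by (auto simp: unit_cube_def mem_box_cart less_imp_le)
  have "measure lborel (unit_cube :: (real ^ 'd) set) \<le> measure lborel (cbox (0::real ^ 'd) 1)"
    using box(2) by (intro measure_mono_fmeasurable fmeasurable_cbox) auto
  then show "measure lborel (unit_cube :: (real ^ 'd) set) \<le> 1"
    by (simp add: measure_lborel_cbox_cart)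
  have "measure lborel (box (0::real ^ 'd) 1) = 1"
    using measure_lborel_cbox_cart[of "0::real ^ 'd" 1]
    by (simp add: measure_lborel_box_eq measure_lborel_cbox_eq)
  moreover have "measure lborel (box (0::real ^ 'd) 1) \<le> measure lborel (unit_cube :: (real ^ 'd) set)"
    using box by (intro measure_mono_fmeasurable fmeasurableI2[OF fmeasurable_cbox]) auto
  ultimately show "1 \<le> measure lborel (unit_cube :: (real ^ 'd) set)" by simp
qed

lemma emeasure_unit_cube: "emeasure lborel (unit_cube :: (real ^ 'd) set) = 1"
proof -
  have "unit_cube \<in> fmeasurable (lborel :: (real ^ 'd) measure)"
    by (rule fmeasurableI2[OF fmeasurable_cbox[of 0 1]]) (auto simp: unit_cube_def mem_box_cart less_imp_le)
  then show ?thesis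
    using measure_unit_cube by (simp add: emeasure_eq_measure2)
qed

abbreviation uniform_cube :: "(real ^ 'd) measure" where
  "uniform_cube \<equiv> uniform_measure lborel unit_cube"

lemma prob_space_uniform_cube: "prob_space uniform_cube"
  by (rule prob_space_uniform_measure) (auto simp: emeasure_unit_cube)

lemma measure_uniform_cube: "S \<in> sets borel \<Longrightarrow> measure uniform_cube S = measure lborel (unit_cube \<inter> S)"
  by (subst measure_uniform_measure) (auto simp: emeasure_unit_cube measure_unit_cube)

definition unit_shifts :: "(real ^ 'd) set" where
  "unit_shifts = (\<lambda>t. \<chi> i. t i) ` (UNIV \<rightarrow>\<^sub>E {-1, 0, 1})"

lemma finite_unit_shifts: "finite unit_shifts"
  unfolding unit_shifts_def by (intro finite_imageI finite_PiE) auto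

lemma card_unit_shifts_le: "card (unit_shifts :: (real ^ 'd) set) \<le> 3 ^ CARD('d)"
proof -
  have card_3: "card {-1, 0, 1::real} = 3"
    by simp
  have "card (unit_shifts :: (real ^ 'd) set) \<le> card ((UNIV :: 'd set) \<rightarrow>\<^sub>E {-1, 0, 1::real})"
    unfolding unit_shifts_def by (rule card_image_le) (simp add: finite_PiE)
  also have "\<dots> = (\<Prod>i\<in>(UNIV :: 'd set). card {-1, 0, 1::real})"
    by (rule card_PiE) simp
  also have "\<dots> = 3 ^ CARD('d)"
    using card_3 by (simp only: prod_constant)
  finally show ?thesis .
qed

lemma torus_cball_subset_shifted_boxes:
  assumes g: "g \<in> unit_cube"
  shows "torus_cball g s \<subseteq> (\<Union>v\<in>unit_shifts. cbox (g + v - (\<chi> i. s)) (g + v + (\<chi> i. s)))"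
proof
  fix y assume "y \<in> torus_cball g s"
  then have "\<forall>i. \<exists>t\<in>{-1, 0, 1::real}. \<bar>y $ i - (g $ i + t)\<bar> \<le> s"
    using g unfolding torus_cball_def tdist_infinity_le_iff
    by (blast intro: circ_dist_le_imp_shift unit_cube_nth)
  then obtain t where t: "\<And>i. t i \<in> {-1, 0, 1}" "\<And>i. \<bar>y $ i - (g $ i + t i)\<bar> \<le> s"
    by metis
  have "(\<chi> i. t i) \<in> unit_shifts"
    unfolding unit_shifts_def using t(1) by (intro image_eqI[of _ _ t]) auto
  moreover have "y \<in> cbox (g + (\<chi> i. t i) - (\<chi> i. s)) (g + (\<chi> i. t i) + (\<chi> i. s))"
    unfolding mem_box_cart
  proof
    fix i
    show "(g + (\<chi> i. t i) - (\<chi> i. s)) $ i \<le> y $ i \<and> y $ i \<le> (g + (\<chi> i. t i) + (\<chi> i. s)) $ i"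
      using t(2)[of i] by (simp add: abs_le_iff)
  qed
  ultimately show "y \<in> (\<Union>v\<in>unit_shifts. cbox (g + v - (\<chi> i. s)) (g + v + (\<chi> i. s)))"
    by blast
qed

lemma measure_torus_cball_le:
  fixes g :: "real ^ 'd"
  assumes g: "g \<in> unit_cube" and s: "0 \<le> s"
  shows "measure uniform_cube (torus_cball g s) \<le> (6 * s) ^ CARD('d)"
proof -
  define B where "B v = cbox (g + v - (\<chi> i. s)) (g + v + (\<chi> i. s))" for v :: "real ^ 'd"
  have "(\<Union>v\<in>unit_shifts. B v) \<in> fmeasurable lborel"
    unfolding B_def by (intro fmeasurable.finite_UN finite_unit_shifts fmeasurable_cbox)
  then have "measure uniform_cube (torus_cball g s) \<le> measure lborel (\<Union>v\<in>unit_shifts. B v)"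
    using torus_cball_subset_shifted_boxes[OF g, of s]
    unfolding measure_uniform_cube[OF sets_torus_cball] B_def
    by (intro measure_mono_fmeasurable) (auto simp del: Int_iff)
  also have "\<dots> \<le> (\<Sum>v\<in>unit_shifts. measure lborel (B v))"
    by (rule measure_UNION_le[OF finite_unit_shifts]) (simp add: B_def)
  also have "\<dots> = real (card (unit_shifts :: (real ^ 'd) set)) * (2 * s) ^ CARD('d)"
    using s by (simp add: B_def measure_lborel_cbox_cart)
  also have "\<dots> \<le> 3 ^ CARD('d) * (2 * s) ^ CARD('d)"
  proof (rule mult_right_mono)
    have "real (card (unit_shifts :: (real ^ 'd) set)) \<le> real (3 ^ CARD('d))"
      using card_unit_shifts_le by (simp only: of_nat_le_iff)
    then show "real (card (unit_shifts :: (real ^ 'd) set)) \<le> 3 ^ CARD('d)"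
      by simp
  qed (use s in simp)
  also have "\<dots> = (3 * (2 * s)) ^ CARD('d)"
    by (rule power_mult_distrib[symmetric])
  finally show ?thesis
    by simp
qed

lemma measure_torus_cball_ge:
  fixes g :: "real ^ 'd"
  assumes g: "g \<in> unit_cube" and s: "0 \<le> s" "s \<le> 1/2"
  shows "s ^ CARD('d) \<le> measure uniform_cube (torus_cball g s)"
proof -
  define l :: "real ^ 'd" where "l = (\<chi> i. if g $ i + s < 1 then g $ i else g $ i - s)"
  have box: "cbox l (l + (\<chi> i. s)) \<subseteq> unit_cube \<inter> torus_cball g s"
  proof
    fix y assume "y \<in> cbox l (l + (\<chi> i. s))"
    then have y: "l $ i \<le> y $ i" "y $ i \<le> l $ i + s" for i
      by (auto simp: mem_box_cart)
    have "0 \<le> y $ i \<and> y $ i < 1" "\<bar>y $ i - g $ i\<bar> \<le> s" for i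
      using y[of i] unit_cube_nth[OF g, of i] s unfolding l_def by (auto split: if_splits)
    moreover have "circ_dist (y $ i) (g $ i) \<le> s" for i
      using circ_dist_le_abs[of "y $ i" "g $ i"] calculation(2)[of i] by linarith
    ultimately show "y \<in> unit_cube \<inter> torus_cball g s"
      unfolding torus_cball_def tdist_infinity_le_iff unit_cube_def by blast
  qed
  have "s ^ CARD('d) = measure lborel (cbox l (l + (\<chi> i. s)))"
    using s by (simp add: measure_lborel_cbox_cart)
  also have "\<dots> \<le> measure lborel (unit_cube \<inter> torus_cball g s)"
  proof (rule measure_mono_fmeasurable[OF box])
    have "unit_cube \<subseteq> cbox (0::real ^ 'd) 1"
      by (auto simp: unit_cube_def mem_box_cart less_imp_le)
    then show "unit_cube \<inter> torus_cball g s \<in> fmeasurable lborel"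
      by (intro fmeasurableI2[OF fmeasurable_cbox[of 0 1]]) auto
  qed simp
  finally show ?thesis
    by (simp add: measure_uniform_cube)
qed

lemma measure_outside_torus_cball_le:
  fixes g :: "real ^ 'd"
  assumes g: "g \<in> unit_cube" and s: "0 \<le> s"
  shows "measure uniform_cube (unit_cube - torus_cball g s) \<le> exp (- (s ^ CARD('d)))"
proof (cases "s \<le> 1/2")
  case False
  then have "tdist \<infinity> y g \<le> s" for y
    using tdist_infinity_le_half[of y g] by linarith
  then have "unit_cube - torus_cball g s = {}"
    unfolding torus_cball_def by blast
  then show ?thesis
    by (simp only: measure_empty exp_ge_zero)
next
  case True
  interpret prob_space "uniform_cube :: (real ^ 'd) measure"
    by (rule prob_space_uniform_cube)
  have ball: "torus_cball g s \<in> events"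
    by simp
  have "measure uniform_cube (unit_cube - torus_cball g s)
      \<le> measure uniform_cube (space uniform_cube - torus_cball g s)"
    using ball by (intro finite_measure_mono Diff_mono) auto
  also have "\<dots> = 1 - measure uniform_cube (torus_cball g s)"
    using ball by (rule prob_compl)
  also have "\<dots> \<le> 1 - s ^ CARD('d)"
    using measure_torus_cball_ge[OF g s True] by linarith
  also have "\<dots> \<le> exp (- (s ^ CARD('d)))"
    using exp_ge_add_one_self[of "- (s ^ CARD('d))"] by linarith
  finally show ?thesis .
qed

lemma prob_space_site_space: "prob_space (site_space n :: (nat \<Rightarrow> real ^ 'd) measure)"
  unfolding site_space_def by (intro prob_space_PiM prob_space_uniform_cube)

lemma measure_site_space_PiE:
  assumes "\<And>i. i < n \<Longrightarrow> F i \<in> sets borel"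
  shows "measure (site_space n :: (nat \<Rightarrow> real ^ 'd) measure) (PiE {..<n} F)
    = (\<Prod>i<n. measure uniform_cube (F i))"
proof -
  interpret prob_space "uniform_cube :: (real ^ 'd) measure"
    by (rule prob_space_uniform_cube)
  interpret product_prob_space "\<lambda>_. uniform_cube :: (real ^ 'd) measure" "{..<n}" ..
  interpret finite_product_prob_space "\<lambda>_. uniform_cube :: (real ^ 'd) measure" "{..<n}"
    by unfold_locales simp
  show ?thesis
    unfolding site_space_def using assms by (intro finite_measure_PiM_emb) auto
qed

section \<open>Witnesses of relevance\<close>

lemma omega_ge_1: "1 \<le> w i \<Longrightarrow> 1 \<le> omega TYPE('d) w i"
  unfolding omega_def by (simp add: ge_one_powr_ge_zero)

lemma omega_mono: "0 \<le> w i \<Longrightarrow> w i \<le> w j \<Longrightarrow> omega TYPE('d) w i \<le> omega TYPE('d) w j"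
  unfolding omega_def by (intro powr_mono2) auto

lemma omega_power_card: "0 < w i \<Longrightarrow> omega TYPE('d::finite) w i ^ CARD('d) = w i"
  unfolding omega_def by (simp add: powr_powr flip: powr_realpow)

lemma minsite_in_and_le:
  assumes "finite A" "A \<noteq> {}"
  shows "minsite w A \<in> A \<and> (\<forall>j\<in>A. w (minsite w A) \<le> w j)"
proof -
  have "Min (w ` A) \<in> w ` A"
    using assms by simp
  then obtain i where "i \<in> A" "Min (w ` A) = w i"
    by (rule imageE)
  then have "i \<in> A \<and> (\<forall>j\<in>A. w i \<le> w j)"
    using assms(1) by (metis Min_le finite_imageI imageI)
  then show ?thesis
    unfolding minsite_def by (rule LeastI)
qed

lemma R_A_nonneg:
  fixes x :: "nat \<Rightarrow> real ^ 'd"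
  assumes "p \<ge> 1" "finite A" "A \<noteq> {}" "\<forall>i\<in>A. 1 \<le> w i \<and> x i \<in> unit_cube"
  shows "0 \<le> R_A p w x A"
proof -
  define a where "a = minsite w A"
  have a: "a \<in> A"
    using minsite_in_and_le[OF assms(2,3)] a_def by blast
  then have "0 \<le> tdist p (x a) (x a)"
    using assms(1,4) tdist_infinity_nonneg tdist_equiv_tdist_infinity order_trans by metis
  moreover have "1 \<le> omega TYPE('d) w a"
    using a assms(4) by (intro omega_ge_1) blast
  moreover have "tdist p (x a) (x a) / (omega TYPE('d) w a + omega TYPE('d) w a) \<le> R_A p w x A"
    unfolding R_A_def Let_def a_def[symmetric] by (intro Max_ge finite_imageI imageI assms(2) a)
  ultimately have "0 \<le> tdist p (x a) (x a) / (omega TYPE('d) w a + omega TYPE('d) w a)"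
    by (intro divide_nonneg_pos) auto
  with \<open>tdist p (x a) (x a) / _ \<le> R_A p w x A\<close> show ?thesis
    by linarith
qed

lemma tdist_infinity_minsite_le_R_A:
  fixes x :: "nat \<Rightarrow> real ^ 'd"
  assumes p: "p \<ge> 1" and A: "finite A" "\<forall>i\<in>A. 1 \<le> w i \<and> x i \<in> unit_cube" and j: "j \<in> A"
  shows "tdist \<infinity> (x j) (x (minsite w A)) \<le> 2 * omega TYPE('d) w j * R_A p w x A"
proof -
  define a where "a = minsite w A"
  define om where "om = omega TYPE('d) w"
  have a: "a \<in> A" "w a \<le> w j"
    using minsite_in_and_le[OF A(1)] j unfolding a_def by blast+
  have w_a: "1 \<le> w a"
    using a(1) A(2) by blast
  have om: "1 \<le> om a" "om a \<le> om j"
    unfolding om_def using w_a a(2) by (auto intro: omega_ge_1 omega_mono)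
  have R: "tdist p (x a) (x j) / (om a + om j) \<le> R_A p w x A"
    unfolding R_A_def Let_def a_def[symmetric] om_def using A(1) j by (intro Max_ge) auto
  have "tdist \<infinity> (x j) (x a) = tdist \<infinity> (x a) (x j)"
    by (rule tdist_infinity_commute)
  also have "\<dots> \<le> tdist p (x a) (x j)"
    using tdist_equiv_tdist_infinity[OF _ _ p] a(1) j A(2) by blast
  also have "\<dots> \<le> (om a + om j) * R_A p w x A"
    using R om by (simp add: pos_divide_le_eq mult.commute)
  also have "\<dots> \<le> 2 * om j * R_A p w x A"
    using om R_A_nonneg[OF p A(1) _ A(2)] j by (intro mult_right_mono) auto
  finally show ?thesis
    unfolding a_def om_def .
qed

lemma tdist_infinity_le_three_omega:
  fixes x :: "nat \<Rightarrow> real ^ 'd"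
  assumes p: "p \<ge> 1" and A: "finite A" "\<forall>i\<in>A. 1 \<le> w i \<and> x i \<in> unit_cube" and j: "j \<in> A"
    and q: "q \<in> unit_cube" and r: "R_A p w x A \<le> r"
    and near: "tdist p (x (minsite w A)) q \<le> omega TYPE('d) w (minsite w A) * r"
  shows "tdist \<infinity> (x j) q \<le> 3 * omega TYPE('d) w j * r"
proof -
  define a where "a = minsite w A"
  define om where "om = omega TYPE('d) w"
  have a: "a \<in> A" "w a \<le> w j"
    using minsite_in_and_le[OF A(1)] j unfolding a_def by blast+
  have w_a: "0 \<le> w a"
    using A(2) a(1) by fastforce
  have om: "1 \<le> om j" "om a \<le> om j"
    unfolding om_def using A(2) j a(2) w_a by (auto intro: omega_ge_1 omega_mono)
  have "tdist \<infinity> (x j) (x a) \<le> 2 * om j * R_A p w x A"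
    using tdist_infinity_minsite_le_R_A[OF p A j] unfolding a_def om_def .
  also have "\<dots> \<le> 2 * om j * r"
    using r om by (intro mult_left_mono) auto
  finally have ja: "tdist \<infinity> (x j) (x a) \<le> 2 * om j * r" .
  have "tdist \<infinity> (x a) q \<le> om a * r"
    using tdist_equiv_tdist_infinity[OF _ q p, of "x a"] A(2) a(1) near
    unfolding a_def om_def by fastforce
  also have "\<dots> \<le> om j * r"
  proof (rule mult_right_mono[OF om(2)])
    have "0 \<le> R_A p w x A"
      using R_A_nonneg[OF p A(1) _ A(2)] j by blast
    then show "0 \<le> r"
      using r by linarith
  qed
  finally have "tdist \<infinity> (x a) q \<le> om j * r" .
  moreover have "tdist \<infinity> (x j) q \<le> tdist \<infinity> (x j) (x a) + tdist \<infinity> (x a) q"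
    using A(2) a(1) j q by (intro tdist_infinity_triangle) auto
  ultimately show ?thesis
    using ja unfolding om_def by linarith
qed

text \<open>The bound r < d holds because some site lies outside A, at l_\<infinity> distance at most 1/2.\<close>

lemma relevant_witness:
  fixes x :: "nat \<Rightarrow> real ^ 'd"
  assumes p: "p \<ge> 1" and w: "\<forall>i<n. 1 \<le> w i" and A: "A \<subset> {..<n}" "A \<noteq> {}"
    and x: "\<forall>i<n. x i \<in> unit_cube" and rel: "relevant p n w x A"
  obtains q r where "q \<in> unit_cube" "0 \<le> r" "r < real CARD('d)"
    "\<forall>j\<in>A. tdist \<infinity> (x j) q \<le> 3 * omega TYPE('d) w j * r"
    "\<forall>i\<in>{..<n} - A. omega TYPE('d) w i * r < real CARD('d) * tdist \<infinity> (x i) q"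
proof -
  define om where "om = omega TYPE('d) w"
  have finA: "finite A"
    using A(1) finite_subset by blast
  have A': "\<forall>i\<in>A. 1 \<le> w i \<and> x i \<in> unit_cube"
    using A(1) w x by blast
  obtain q r where q: "q \<in> unit_cube" and R: "R_A p w x A \<le> r"
    and near: "tdist p (x (minsite w A)) q \<le> om (minsite w A) * r"
    and far: "\<forall>i\<in>{..<n} - A. om i * r < tdist p (x i) q"
    using rel unfolding relevant_def Let_def om_def by blast
  have r: "0 \<le> r"
    using R_A_nonneg[OF p finA A(2) A'] R by linarith
  have far': "om i * r < CARD('d) * tdist \<infinity> (x i) q" if i: "i \<in> {..<n} - A" for i
  proof -
    have "om i * r < tdist p (x i) q"
      using far i by blast
    moreover have "tdist p (x i) q \<le> CARD('d) * tdist \<infinity> (x i) q"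
      using tdist_equiv_tdist_infinity[OF _ q p, of "x i"] x i by blast
    ultimately show ?thesis
      by linarith
  qed
  obtain i0 where i0: "i0 \<in> {..<n} - A"
    using A(1) by blast
  then have "1 \<le> om i0"
    using w omega_ge_1 unfolding om_def by blast
  then have "r \<le> om i0 * r"
    using r by (simp add: mult_le_cancel_right1)
  also have "\<dots> < CARD('d) * tdist \<infinity> (x i0) q"
    using far' i0 by blast
  also have "\<dots> \<le> CARD('d) * (1/2)"
    using tdist_infinity_le_half by (intro mult_left_mono) auto
  finally have "r < CARD('d)"
    by simp
  moreover have "\<forall>j\<in>A. tdist \<infinity> (x j) q \<le> 3 * om j * r"
    using tdist_infinity_le_three_omega[OF p finA A' _ q R] near unfolding om_def by blast
  ultimately show ?thesis
    using that q r far' unfolding om_def by blast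
qed

section \<open>Cluster events\<close>

text \<open>The trace of relevance of A at grid spacing h, seen from the grid point g.\<close>

definition cluster_event ::
    "nat \<Rightarrow> (nat \<Rightarrow> real) \<Rightarrow> nat set \<Rightarrow> real \<Rightarrow> real ^ 'd \<Rightarrow> bool \<Rightarrow> (nat \<Rightarrow> real ^ 'd) set" where
  "cluster_event n w A h g isolated = PiE {..<n} (\<lambda>i.
     if i \<in> A then torus_cball g (16 * CARD('d) * omega TYPE('d) w i * h)
     else if isolated then unit_cube - torus_cball g (omega TYPE('d) w i * h)
     else unit_cube)"

lemma dyadic_bracket:
  fixes a r :: real
  assumes "a / 2 ^ M < r" "r \<le> a"
  shows "\<exists>m<M. a / 2 ^ Suc m < r \<and> r \<le> a / 2 ^ m"
  using assms(1)
proof (induction M)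
  case 0
  then show ?case
    using assms(2) by simp
next
  case (Suc M)
  show ?case
  proof (cases "a / 2 ^ M < r")
    case True
    then show ?thesis
      using Suc.IH less_Suc_eq by blast
  next
    case False
    then show ?thesis
      using Suc.prems by (intro exI[of _ M]) auto
  qed
qed

lemma tdist_infinity_snap_le:
  fixes y q g :: "real ^ 'd"
  assumes y: "y \<in> unit_cube" and q: "q \<in> unit_cube" and g: "g \<in> unit_cube" "tdist \<infinity> q g \<le> h"
    and near: "tdist \<infinity> y q \<le> 3 * c * r" and r: "r \<le> 4 * real CARD('d) * h" and c: "1 \<le> c"
  shows "tdist \<infinity> y g \<le> 16 * real CARD('d) * c * h"
proof -
  define d where "d = real CARD('d)"
  have d: "1 \<le> d" and h: "0 \<le> h"
    using g tdist_infinity_nonneg[OF q g(1)] unfolding d_def by auto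
  have "tdist \<infinity> y g \<le> tdist \<infinity> y q + tdist \<infinity> q g"
    using y q g by (intro tdist_infinity_triangle)
  also have "\<dots> \<le> 3 * c * (4 * d * h) + h"
  proof -
    have "3 * c * r \<le> 3 * c * (4 * d * h)"
      using r c unfolding d_def by (intro mult_left_mono) auto
    then show ?thesis
      using near g(2) by linarith
  qed
  also have "\<dots> \<le> 16 * d * c * h"
  proof -
    have "1 * 1 * h \<le> d * c * h"
      using d c h by (intro mult_right_mono mult_mono) auto
    moreover have "0 \<le> d * c * h"
      using d c h by simp
    ultimately show ?thesis
      by (simp add: algebra_simps)
  qed
  finally show ?thesis
    unfolding d_def .
qed

lemma tdist_infinity_snap_gt:
  fixes y q g :: "real ^ 'd"
  assumes y: "y \<in> unit_cube" and q: "q \<in> unit_cube" and g: "g \<in> unit_cube" "tdist \<infinity> q g \<le> h"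
    and far: "c * r < real CARD('d) * tdist \<infinity> y q" and r: "2 * real CARD('d) * h < r"
    and c: "1 \<le> c"
  shows "c * h < tdist \<infinity> y g"
proof -
  define d where "d = real CARD('d)"
  have d: "1 \<le> d" and h: "0 \<le> h"
    using g tdist_infinity_nonneg[OF q g(1)] unfolding d_def by auto
  have "d * (2 * c * h) = c * (2 * d * h)"
    by (simp add: algebra_simps)
  also have "\<dots> < c * r"
    using r c unfolding d_def by (intro mult_strict_left_mono) auto
  also have "\<dots> < d * tdist \<infinity> y q"
    using far unfolding d_def .
  finally have "2 * c * h < tdist \<infinity> y q"
    using d by (simp add: mult_less_cancel_left_pos)
  moreover have "tdist \<infinity> y q \<le> tdist \<infinity> y g + h"
    using tdist_infinity_triangle[OF y g(1) q] g(2) tdist_infinity_commute[of g q] by linarith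
  moreover have "h \<le> c * h"
    using c h by (simp add: mult_le_cancel_right1)
  ultimately show ?thesis
    by linarith
qed

lemma witness_imp_cluster_event:
  fixes x :: "nat \<Rightarrow> real ^ 'd" and h r :: real
  assumes w: "\<forall>i<n. 1 \<le> w i" and x: "x \<in> PiE {..<n} (\<lambda>_. unit_cube)"
    and q: "q \<in> unit_cube" and g: "g \<in> unit_cube" "tdist \<infinity> q g \<le> h"
    and r: "r \<le> 4 * real CARD('d) * h" "isolated \<longrightarrow> 2 * real CARD('d) * h < r"
    and near: "\<forall>j\<in>A. tdist \<infinity> (x j) q \<le> 3 * omega TYPE('d) w j * r"
    and far: "\<forall>i\<in>{..<n} - A. omega TYPE('d) w i * r < real CARD('d) * tdist \<infinity> (x i) q"
  shows "x \<in> cluster_event n w A h g isolated"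
  unfolding cluster_event_def
proof (rule PiE_I)
  fix i assume i: "i \<in> {..<n}"
  have xi: "x i \<in> unit_cube" and om: "1 \<le> omega TYPE('d) w i"
    using x w i by (auto intro: omega_ge_1)
  show "x i \<in> (if i \<in> A then torus_cball g (16 * CARD('d) * omega TYPE('d) w i * h)
      else if isolated then unit_cube - torus_cball g (omega TYPE('d) w i * h) else unit_cube)"
  proof (cases "i \<in> A")
    case True
    then show ?thesis
      using tdist_infinity_snap_le[OF xi q g _ r(1) om] near xi unfolding torus_cball_def by simp
  next
    case False
    then show ?thesis
      using tdist_infinity_snap_gt[OF xi q g _ _ om, of r] far i r(2) xi unfolding torus_cball_def
      by (cases isolated) auto
  qed
next
  fix i assume "i \<notin> {..<n}"
  then show "x i = undefined"
    using x by auto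
qed

lemma witness_imp_grid_cluster_event:
  fixes x :: "nat \<Rightarrow> real ^ 'd" and r :: real
  assumes w: "\<forall>i<n. 1 \<le> w i" and x: "x \<in> PiE {..<n} (\<lambda>_. unit_cube)" and q: "q \<in> unit_cube"
    and r: "r \<le> real CARD('d) / 2 ^ m" "isolated \<longrightarrow> real CARD('d) / 2 ^ Suc m < r"
    and near: "\<forall>j\<in>A. tdist \<infinity> (x j) q \<le> 3 * omega TYPE('d) w j * r"
    and far: "\<forall>i\<in>{..<n} - A. omega TYPE('d) w i * r < real CARD('d) * tdist \<infinity> (x i) q"
  shows "\<exists>g\<in>grid (2 ^ (m + 2)). x \<in> cluster_event n w A (1 / 2 ^ (m + 2)) g isolated"
proof -
  define h :: real where "h = 1 / 2 ^ (m + 2)"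
  have "\<exists>g\<in>grid (2 ^ (m + 2)). tdist \<infinity> q g \<le> h"
    unfolding h_def using grid_approx[of q "2 ^ (m + 2)"] q by simp
  then obtain g where g: "g \<in> grid (2 ^ (m + 2))" "tdist \<infinity> q g \<le> h"
    by blast
  have g_cube: "g \<in> unit_cube"
    using g(1) grid_subset_unit_cube[of "2 ^ (m + 2)"] by auto
  have scale: "real CARD('d) / 2 ^ m = 4 * real CARD('d) * h"
    "real CARD('d) / 2 ^ Suc m = 2 * real CARD('d) * h"
    unfolding h_def by (simp_all add: power_add)
  have "x \<in> cluster_event n w A h g isolated"
    using r near far unfolding scale by (intro witness_imp_cluster_event[OF w x q g_cube g(2)])
  then show ?thesis
    using g(1) unfolding h_def by blast
qed

lemma relevant_imp_cluster_event:
  fixes x :: "nat \<Rightarrow> real ^ 'd"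
  assumes p: "p \<ge> 1" and w: "\<forall>i<n. 1 \<le> w i" and A: "A \<subset> {..<n}" "A \<noteq> {}"
    and x: "x \<in> PiE {..<n} (\<lambda>_. unit_cube)" and rel: "relevant p n w x A"
  shows "\<exists>m\<le>M. \<exists>g\<in>grid (2 ^ (m + 2)). x \<in> cluster_event n w A (1 / 2 ^ (m + 2)) g (m < M)"
proof -
  have "\<forall>i<n. x i \<in> unit_cube"
    using x by auto
  then obtain q r where q: "q \<in> unit_cube" and "0 \<le> r" and r: "r < real CARD('d)"
    and near: "\<forall>j\<in>A. tdist \<infinity> (x j) q \<le> 3 * omega TYPE('d) w j * r"
    and far: "\<forall>i\<in>{..<n} - A. omega TYPE('d) w i * r < real CARD('d) * tdist \<infinity> (x i) q"
    by (rule relevant_witness[OF p w A _ rel])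
  note snap = witness_imp_grid_cluster_event[OF w x q _ _ near far]
  show ?thesis
  proof (cases "r \<le> real CARD('d) / 2 ^ M")
    case True
    then have "\<exists>g\<in>grid (2 ^ (M + 2)). x \<in> cluster_event n w A (1 / 2 ^ (M + 2)) g (M < M)"
      by (intro snap) simp_all
    then show ?thesis
      by blast
  next
    case False
    then obtain m where m: "m < M" "real CARD('d) / 2 ^ Suc m < r" "r \<le> real CARD('d) / 2 ^ m"
      using dyadic_bracket[of "real CARD('d)" M r] r by auto
    then have "\<exists>g\<in>grid (2 ^ (m + 2)). x \<in> cluster_event n w A (1 / 2 ^ (m + 2)) g (m < M)"
      by (intro snap) simp_all
    then show ?thesis
      using m(1) less_imp_le by blast
  qed
qed

lemma sets_cluster_event: "cluster_event n w A h g isolated \<in> sets (site_space n)"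
  unfolding cluster_event_def site_space_def by (intro sets_PiM_I_finite) auto

lemma measure_torus_cball_omega_le:
  fixes g :: "real ^ 'd" and h :: real
  assumes w: "1 \<le> w i" and g: "g \<in> unit_cube" and h: "0 \<le> h"
  shows "measure uniform_cube (torus_cball g (16 * real CARD('d) * omega TYPE('d) w i * h))
    \<le> (96 * real CARD('d)) ^ CARD('d) * w i * h ^ CARD('d)"
proof -
  have "0 \<le> 16 * real CARD('d) * omega TYPE('d) w i * h"
    using omega_ge_1[of w i, OF w, where 'd='d] h by auto
  then have "measure uniform_cube (torus_cball g (16 * real CARD('d) * omega TYPE('d) w i * h))
      \<le> (6 * (16 * real CARD('d) * omega TYPE('d) w i * h)) ^ CARD('d)"
    by (rule measure_torus_cball_le[OF g])
  also have "\<dots> = (96 * real CARD('d)) ^ CARD('d) * omega TYPE('d) w i ^ CARD('d) * h ^ CARD('d)"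
    by (simp add: power_mult_distrib)
  also have "omega TYPE('d) w i ^ CARD('d) = w i"
    using w by (intro omega_power_card) auto
  finally show ?thesis .
qed

lemma measure_outside_torus_cball_omega_le:
  fixes g :: "real ^ 'd" and h :: real
  assumes w: "1 \<le> w i" and g: "g \<in> unit_cube" and h: "0 \<le> h"
  shows "measure uniform_cube (unit_cube - torus_cball g (omega TYPE('d) w i * h))
    \<le> exp (- (w i * h ^ CARD('d)))"
proof -
  have "0 \<le> omega TYPE('d) w i * h"
    using omega_ge_1[of w i, OF w, where 'd='d] h by auto
  then have "measure uniform_cube (unit_cube - torus_cball g (omega TYPE('d) w i * h))
      \<le> exp (- ((omega TYPE('d) w i * h) ^ CARD('d)))"
    by (rule measure_outside_torus_cball_le[OF g])
  also have "(omega TYPE('d) w i * h) ^ CARD('d) = w i * h ^ CARD('d)"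
    using w by (simp add: power_mult_distrib omega_power_card)
  finally show ?thesis .
qed

lemma measure_cluster_event_le:
  fixes g :: "real ^ 'd" and h :: real
  assumes w: "\<forall>i<n. 1 \<le> w i" and A: "A \<subseteq> {..<n}" and g: "g \<in> unit_cube" and h: "0 \<le> h"
  shows "measure (site_space n) (cluster_event n w A h g isolated)
    \<le> (96 * real CARD('d)) ^ (CARD('d) * card A) * (\<Prod>i\<in>A. w i) * h ^ (CARD('d) * card A)
       * (if isolated then exp (- (\<Sum>i\<in>{..<n} - A. w i) * h ^ CARD('d)) else 1)"
proof -
  define d where "d = CARD('d)"
  define F where "F i = (if i \<in> A then torus_cball g (16 * d * omega TYPE('d) w i * h)
     else if isolated then unit_cube - torus_cball g (omega TYPE('d) w i * h) else unit_cube)" for i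
  have near: "measure uniform_cube (F i) \<le> (96 * real d) ^ d * w i * h ^ d" if "i \<in> A" for i
    using that A w measure_torus_cball_omega_le[OF _ g h, of w i] unfolding F_def d_def by auto
  have far: "measure uniform_cube (F i) \<le> (if isolated then exp (- (w i * h ^ d)) else 1)"
    if "i \<in> {..<n} - A" for i
    using that w measure_outside_torus_cball_omega_le[OF _ g h, of w i]
      prob_space.prob_le_1[OF prob_space_uniform_cube] unfolding F_def d_def by auto
  have "measure (site_space n) (cluster_event n w A h g isolated) = (\<Prod>i<n. measure uniform_cube (F i))"
    unfolding cluster_event_def F_def d_def by (rule measure_site_space_PiE) auto
  also have "\<dots> = (\<Prod>i\<in>A. measure uniform_cube (F i)) * (\<Prod>i\<in>{..<n} - A. measure uniform_cube (F i))"
    using A by (metis finite_lessThan prod.subset_diff mult.commute)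
  also have "\<dots> \<le> (\<Prod>i\<in>A. (96 * real d) ^ d * w i * h ^ d)
      * (\<Prod>i\<in>{..<n} - A. if isolated then exp (- (w i * h ^ d)) else 1)"
    using near far w A h by (intro mult_mono prod_mono prod_nonneg) (auto simp: less_le_trans)
  also have "\<dots> = (96 * real d) ^ (d * card A) * (\<Prod>i\<in>A. w i) * h ^ (d * card A)
      * (if isolated then exp (- (\<Sum>i\<in>{..<n} - A. w i) * h ^ d) else 1)"
  proof -
    have "(\<Prod>i\<in>{..<n} - A. exp (- (w i * h ^ d))) = exp (- (\<Sum>i\<in>{..<n} - A. w i) * h ^ d)"
      by (simp add: exp_sum sum_distrib_right flip: sum_negf)
    then show ?thesis
      by (simp add: prod.distrib power_mult)
  qed
  finally show ?thesis
    unfolding d_def .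
qed

section \<open>Summation over grid points and scales\<close>

lemma measure_cluster_events_le:
  fixes w :: "nat \<Rightarrow> real"
  assumes w: "\<forall>i<n. 1 \<le> w i" and A: "A \<subseteq> {..<n}" "card A = k" "1 \<le> k" and N: "0 < N"
  shows "measure (site_space n) (\<Union>g\<in>grid N. cluster_event n w A (1 / N) g isolated :: (nat \<Rightarrow> real ^ 'd) set)
    \<le> (96 * real CARD('d)) ^ (CARD('d) * k) * (\<Prod>i\<in>A. w i) * (1 / N) ^ (CARD('d) * (k - 1))
       * (if isolated then exp (- (\<Sum>i\<in>{..<n} - A. w i) * (1 / N) ^ CARD('d)) else 1)"
proof -
  define d where "d = CARD('d)"
  define C where "C = (96 * real d) ^ (d * k) * (\<Prod>i\<in>A. w i)
    * (if isolated then exp (- (\<Sum>i\<in>{..<n} - A. w i) * (1 / N) ^ d) else 1)"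
  have "0 \<le> (\<Prod>i\<in>A. w i)"
    using w A(1) by (intro prod_nonneg) auto
  then have C: "0 \<le> C"
    unfolding C_def by simp
  have "measure (site_space n) (\<Union>g\<in>grid N. cluster_event n w A (1 / N) g isolated :: (nat \<Rightarrow> real ^ 'd) set)
      \<le> (\<Sum>g\<in>grid N. measure (site_space n) (cluster_event n w A (1 / N) g isolated :: (nat \<Rightarrow> real ^ 'd) set))"
    by (intro measure_UNION_le finite_grid sets_cluster_event)
  also have "\<dots> \<le> (\<Sum>g\<in>(grid N :: (real ^ 'd) set). C * (1 / N) ^ (d * k))"
  proof (rule sum_mono)
    fix g :: "real ^ 'd" assume "g \<in> grid N"
    then have "g \<in> unit_cube"
      using grid_subset_unit_cube[OF N] by blast
    then show "measure (site_space n) (cluster_event n w A (1 / N) g isolated) \<le> C * (1 / N) ^ (d * k)"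
      using measure_cluster_event_le[OF w A(1), of g "1 / N" isolated] A(2)
      unfolding C_def d_def by (simp add: mult_ac)
  qed
  also have "\<dots> \<le> real N ^ d * (C * (1 / N) ^ (d * k))"
    using card_grid_le[where 'd='d, of N] C unfolding d_def
    by (simp only: sum_constant of_nat_le_iff[symmetric] of_nat_power) (intro mult_right_mono, auto)
  also have "\<dots> = C * (1 / N) ^ (d * (k - 1))"
  proof -
    have "d * k = d + d * (k - 1)"
      using A(3) by (simp add: algebra_simps le_add_diff_inverse)
    then show ?thesis
      using N by (simp add: power_add power_one_over)
  qed
  finally show ?thesis
    unfolding C_def d_def by (simp add: mult_ac)
qed

lemma power_mult_exp_minus_le:
  fixes t :: real
  assumes t: "0 < t" and k: "1 \<le> k"
  shows "t ^ (k - 1) * exp (- t) \<le> real k ^ k / t"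
proof -
  have "(t / real k) ^ k \<le> (1 + t / real k) ^ k"
    using t k by (intro power_mono) auto
  also have "\<dots> \<le> exp t"
    using t k by (intro exp_ge_one_plus_x_over_n_power_n) auto
  finally have "t ^ k \<le> real k ^ k * exp t"
    using k by (simp add: power_divide field_simps)
  moreover have "t ^ (k - 1) * exp (- t) = t ^ k * exp (- t) / t"
    using t k by (simp add: power_eq_if[of t k] field_simps)
  ultimately show ?thesis
    using t by (simp add: exp_minus field_simps)
qed

lemma sum_power_mult_exp_scales_le:
  fixes t :: "nat \<Rightarrow> real"
  assumes big: "\<forall>m<M. 2 ^ (M - Suc m) \<le> t m" and last: "0 \<le> t M" "t M \<le> 1" and k: "1 \<le> k"
  shows "(\<Sum>m\<le>M. t m ^ (k - 1) * (if m < M then exp (- t m) else 1)) \<le> 2 * real k ^ k + 1"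
proof -
  have "(\<Sum>m<M. t m ^ (k - 1) * exp (- t m)) \<le> (\<Sum>m<M. real k ^ k * (1/2) ^ (M - Suc m))"
  proof (rule sum_mono)
    fix m assume "m \<in> {..<M}"
    then have tm: "2 ^ (M - Suc m) \<le> t m"
      using big by auto
    moreover have tpos: "0 < t m"
      by (rule less_le_trans[OF _ tm]) simp
    ultimately have "t m ^ (k - 1) * exp (- t m) \<le> real k ^ k / t m"
      using k by (intro power_mult_exp_minus_le) auto
    also have "\<dots> \<le> real k ^ k / 2 ^ (M - Suc m)"
      using tm tpos by (intro divide_left_mono mult_pos_pos) auto
    finally show "t m ^ (k - 1) * exp (- t m) \<le> real k ^ k * (1/2) ^ (M - Suc m)"
      by (simp add: power_divide)
  qed
  also have "\<dots> = real k ^ k * (\<Sum>m<M. (1/2) ^ (M - Suc m))"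
    by (simp add: sum_distrib_left)
  also have "\<dots> = real k ^ k * (\<Sum>m<M. (1/2) ^ m)"
    using sum.nat_diff_reindex[of "\<lambda>m. (1/2::real) ^ m" M] by simp
  also have "\<dots> \<le> real k ^ k * 2"
    by (intro mult_left_mono) (auto simp: sum_gp_strict)
  finally have "(\<Sum>m<M. t m ^ (k - 1) * exp (- t m)) \<le> 2 * real k ^ k"
    by simp
  moreover have "t M ^ (k - 1) \<le> 1"
    using last by (intro power_le_one)
  ultimately show ?thesis
    by (simp add: lessThan_Suc_atMost[symmetric])
qed

lemma exists_dyadic_scale_le_1:
  fixes W :: real and d :: nat
  assumes W: "0 < W" and d: "1 \<le> d"
  shows "\<exists>m. W * (1 / 2 ^ (m + 2)) ^ d \<le> 1"
proof -
  obtain m where m: "(1/2) ^ m < 1 / W"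
    using real_arch_pow_inv[of "1 / W" "1/2"] W by auto
  have "(1 / 2 ^ (m + 2)) ^ d \<le> (1 / 2 ^ (m + 2) :: real) ^ 1"
  proof (rule power_decreasing)
    have "(1::real) \<le> 2 ^ (m + 2)"
      by (rule one_le_power) simp
    then show "1 / 2 ^ (m + 2) \<le> (1::real)"
      by simp
  qed (use d in auto)
  also have "\<dots> \<le> 1 / 2 ^ m"
    unfolding power_one_right by (intro divide_left_mono) auto
  also have "\<dots> = (1/2) ^ m"
    by (simp add: power_one_over)
  finally have "W * (1 / 2 ^ (m + 2)) ^ d \<le> W * (1 / W)"
    using m W by (intro mult_left_mono) auto
  then show ?thesis
    using W by auto
qed

lemma threshold_scale:
  fixes W :: real and d :: nat
  assumes W: "0 < W" and d: "1 \<le> d"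
  obtains M where "\<forall>m<M. 2 ^ (M - Suc m) \<le> W * (1 / 2 ^ (m + 2)) ^ d"
    "W * (1 / 2 ^ (M + 2)) ^ d \<le> 1"
proof -
  define t where "t m = W * (1 / 2 ^ (m + 2)) ^ d" for m
  define M where "M = (LEAST m. t m \<le> 1)"
  have "t M \<le> 1"
    unfolding M_def t_def using exists_dyadic_scale_le_1[OF W d] by (rule LeastI_ex)
  moreover have "2 ^ (M - Suc m) \<le> t m" if m: "m < M" for m
  proof -
    define j where "j = M - Suc m"
    have "\<not> t (M - 1) \<le> 1"
      unfolding M_def by (rule not_less_Least) (use m M_def in simp)
    moreover have "1 / 2 ^ (m + 2) = (1 / 2 ^ (M - 1 + 2) :: real) * 2 ^ j"
    proof -
      have "M - 1 + 2 = (m + 2) + j"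
        using m unfolding j_def by simp
      then show ?thesis
        by (simp add: power_add)
    qed
    then have "t m = t (M - 1) * (2 ^ j) ^ d"
      unfolding t_def by (simp only: power_mult_distrib mult.assoc)
    moreover have "(2::real) ^ j \<le> (2 ^ j) ^ d"
      using power_increasing[OF d, of "(2::real) ^ j"] one_le_power[of "2::real" j] by simp
    moreover have "((2::real) ^ j) ^ d \<le> t (M - 1) * (2 ^ j) ^ d"
      using \<open>\<not> t (M - 1) \<le> 1\<close> mult_right_mono[of 1 "t (M - 1)" "((2::real) ^ j) ^ d"] by simp
    ultimately show ?thesis
      unfolding j_def by linarith
  qed
  ultimately show ?thesis
    using that unfolding t_def by blast
qed

lemma measure_cluster_events_scales_le:
  fixes w :: "nat \<Rightarrow> real"
  assumes w: "\<forall>i<n. 1 \<le> w i" and A: "A \<subseteq> {..<n}" "card A = k" "1 \<le> k"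
    and W: "W = (\<Sum>i\<in>{..<n} - A. w i)" "0 < W"
    and M: "\<forall>m<M. 2 ^ (M - Suc m) \<le> W * (1 / 2 ^ (m + 2)) ^ CARD('d)"
      "W * (1 / 2 ^ (M + 2)) ^ CARD('d) \<le> 1"
  shows "(\<Sum>m\<le>M. measure (site_space n)
      (\<Union>g\<in>grid (2 ^ (m + 2)). cluster_event n w A (1 / 2 ^ (m + 2)) g (m < M) :: (nat \<Rightarrow> real ^ 'd) set))
    \<le> (96 * real CARD('d)) ^ (CARD('d) * k) * (2 * real k ^ k + 1) * (\<Prod>i\<in>A. w i) / W ^ (k - 1)"
proof -
  define d where "d = CARD('d)"
  define C where "C = (96 * real d) ^ (d * k) * (\<Prod>i\<in>A. w i) / W ^ (k - 1)"
  define t where "t m = W * (1 / 2 ^ (m + 2)) ^ d" for m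
  have "0 \<le> (\<Prod>i\<in>A. w i)"
    using w A(1) by (intro prod_nonneg) auto
  then have C: "0 \<le> C"
    unfolding C_def using W(2) by simp
  have "measure (site_space n)
      (\<Union>g\<in>grid (2 ^ (m + 2)). cluster_event n w A (1 / 2 ^ (m + 2)) g (m < M) :: (nat \<Rightarrow> real ^ 'd) set)
    \<le> C * (t m ^ (k - 1) * (if m < M then exp (- t m) else 1))" for m
  proof -
    define h :: real where "h = 1 / 2 ^ (m + 2)"
    define E where "E = (if m < M then exp (- t m) else 1)"
    have "measure (site_space n)
        (\<Union>g\<in>grid (2 ^ (m + 2)). cluster_event n w A h g (m < M) :: (nat \<Rightarrow> real ^ 'd) set)
      \<le> (96 * real d) ^ (d * k) * (\<Prod>i\<in>A. w i) * h ^ (d * (k - 1)) * E"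
      using measure_cluster_events_le[OF w A, of "2 ^ (m + 2)" "m < M", where 'd='d]
      unfolding of_nat_power of_nat_numeral W(1)[symmetric] h_def E_def t_def d_def
      by (cases "m < M") simp_all
    also have "h ^ (d * (k - 1)) = t m ^ (k - 1) / W ^ (k - 1)"
      unfolding t_def h_def using W(2) by (simp add: power_mult power_mult_distrib)
    finally show ?thesis
      unfolding C_def E_def h_def by (simp add: algebra_simps)
  qed
  then have "(\<Sum>m\<le>M. measure (site_space n)
      (\<Union>g\<in>grid (2 ^ (m + 2)). cluster_event n w A (1 / 2 ^ (m + 2)) g (m < M) :: (nat \<Rightarrow> real ^ 'd) set))
    \<le> C * (\<Sum>m\<le>M. t m ^ (k - 1) * (if m < M then exp (- t m) else 1))"
    by (simp add: sum_distrib_left sum_mono)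
  also have "\<dots> \<le> C * (2 * real k ^ k + 1)"
    using M W(2) A(3) C unfolding t_def d_def
    by (intro mult_left_mono sum_power_mult_exp_scales_le) auto
  finally show ?thesis
    unfolding C_def d_def by (simp add: field_simps)
qed

lemma sets_site_space_unit_cube:
  "PiE {..<n} (\<lambda>_. unit_cube) \<in> sets (site_space n :: (nat \<Rightarrow> real ^ 'd) measure)"
  unfolding site_space_def by (intro sets_PiM_I_finite) auto

lemma measure_site_space_outside_unit_cube:
  "measure (site_space n :: (nat \<Rightarrow> real ^ 'd) measure)
     (space (site_space n) - PiE {..<n} (\<lambda>_. unit_cube)) = 0"
proof -
  interpret prob_space "site_space n :: (nat \<Rightarrow> real ^ 'd) measure"
    by (rule prob_space_site_space)
  have "measure (site_space n :: (nat \<Rightarrow> real ^ 'd) measure) (PiE {..<n} (\<lambda>_. unit_cube)) = 1"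
    using measure_site_space_PiE[of n "\<lambda>_. unit_cube"]
    by (simp add: measure_uniform_cube measure_unit_cube)
  then show ?thesis
    using prob_compl[OF sets_site_space_unit_cube] by simp
qed

lemma relevant_subset_cluster_events:
  assumes p: "p \<ge> 1" and w: "\<forall>i<n. 1 \<le> w i" and A: "A \<subset> {..<n}" "A \<noteq> {}"
  obtains B where "B \<in> sets (site_space n :: (nat \<Rightarrow> real ^ 'd) measure)"
    "{x \<in> space (site_space n). relevant p n w x A} \<subseteq> B"
    "measure (site_space n) B \<le> (\<Sum>m\<le>M. measure (site_space n)
      (\<Union>g\<in>grid (2 ^ (m + 2)). cluster_event n w A (1 / 2 ^ (m + 2)) g (m < M) :: (nat \<Rightarrow> real ^ 'd) set))"
proof -
  let ?S = "site_space n :: (nat \<Rightarrow> real ^ 'd) measure"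
  define C where "C = PiE {..<n} (\<lambda>_. unit_cube :: (real ^ 'd) set)"
  define E :: "nat \<Rightarrow> (nat \<Rightarrow> real ^ 'd) set"
    where "E m = (\<Union>g\<in>grid (2 ^ (m + 2)). cluster_event n w A (1 / 2 ^ (m + 2)) g (m < M))" for m
  have C: "space ?S - C \<in> sets ?S"
    unfolding C_def using sets_site_space_unit_cube by blast
  have E: "E m \<in> sets ?S" for m
    unfolding E_def by (intro sets.finite_UN finite_grid ballI sets_cluster_event)
  have "{x \<in> space ?S. relevant p n w x A} \<subseteq> (space ?S - C) \<union> (\<Union>m\<le>M. E m)"
  proof (intro subsetI)
    fix x assume x: "x \<in> {x \<in> space ?S. relevant p n w x A}"
    show "x \<in> (space ?S - C) \<union> (\<Union>m\<le>M. E m)"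
    proof (cases "x \<in> C")
      case True
      then obtain m g where "m \<le> M" "g \<in> grid (2 ^ (m + 2))"
        "x \<in> cluster_event n w A (1 / 2 ^ (m + 2)) g (m < M)"
        using relevant_imp_cluster_event[OF p w A, of x M] x unfolding C_def by blast
      then show ?thesis
        unfolding E_def by blast
    qed (use x in blast)
  qed
  moreover have "measure ?S ((space ?S - C) \<union> (\<Union>m\<le>M. E m)) \<le> (\<Sum>m\<le>M. measure ?S (E m))"
  proof -
    have "measure ?S ((space ?S - C) \<union> (\<Union>m\<le>M. E m))
        \<le> measure ?S (space ?S - C) + measure ?S (\<Union>m\<le>M. E m)"
      using C E by (intro measure_Un_le) auto
    moreover have "measure ?S (\<Union>m\<le>M. E m) \<le> (\<Sum>m\<le>M. measure ?S (E m))"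
      using E by (intro measure_UNION_le) auto
    moreover have "measure ?S (space ?S - C) = 0"
      unfolding C_def by (rule measure_site_space_outside_unit_cube)
    ultimately show ?thesis
      by linarith
  qed
  moreover have "(space ?S - C) \<union> (\<Union>m\<le>M. E m) \<in> sets ?S"
    using C E by auto
  ultimately show ?thesis
    using that unfolding E_def by blast
qed

lemma measure_relevant_le:
  fixes w :: "nat \<Rightarrow> real" and p :: ennreal
  assumes p: "p \<ge> 1" and w: "\<forall>i<n. 1 \<le> w i" and A: "A \<subset> {..<n}" "card A = k" "1 \<le> k"
  shows "\<exists>B \<in> sets (site_space n :: (nat \<Rightarrow> real ^ 'd) measure).
    {x \<in> space (site_space n). relevant p n w x A} \<subseteq> B \<and>
    measure (site_space n) B \<le> (96 * real CARD('d)) ^ (CARD('d) * k) * (2 * real k ^ k + 1)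
      * (\<Prod>i\<in>A. w i) / (\<Sum>i\<in>{..<n} - A. w i) ^ (k - 1)"
proof -
  define W where "W = (\<Sum>i\<in>{..<n} - A. w i)"
  obtain i0 where i0: "i0 \<in> {..<n} - A"
    using A(1) by blast
  have "1 \<le> W"
    unfolding W_def using i0 w by (intro order_trans[OF _ member_le_sum[OF i0]]) auto
  then obtain M where M: "\<forall>m<M. 2 ^ (M - Suc m) \<le> W * (1 / 2 ^ (m + 2)) ^ CARD('d)"
    "W * (1 / 2 ^ (M + 2)) ^ CARD('d) \<le> 1"
    using threshold_scale[of W "CARD('d)"] by auto
  have "A \<noteq> {}"
    using A(2,3) by auto
  then obtain B where B: "B \<in> sets (site_space n :: (nat \<Rightarrow> real ^ 'd) measure)"
    "{x \<in> space (site_space n). relevant p n w x A} \<subseteq> B"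
    "measure (site_space n) B \<le> (\<Sum>m\<le>M. measure (site_space n)
      (\<Union>g\<in>grid (2 ^ (m + 2)). cluster_event n w A (1 / 2 ^ (m + 2)) g (m < M) :: (nat \<Rightarrow> real ^ 'd) set))"
    using relevant_subset_cluster_events[OF p w A(1)] by blast
  have "A \<subseteq> {..<n}" "0 < W"
    using A(1) \<open>1 \<le> W\<close> by auto
  then have "measure (site_space n) B \<le> (96 * real CARD('d)) ^ (CARD('d) * k) * (2 * real k ^ k + 1)
      * (\<Prod>i\<in>A. w i) / W ^ (k - 1)"
    by (intro order_trans[OF B(3) measure_cluster_events_scales_le[OF w _ A(2,3) W_def _ M]])
  then show ?thesis
    using B(1,2) unfolding W_def by blast
qed

theorem mainTheorem15:
  fixes k :: nat and p :: ennreal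
  assumes "k \<ge> 2" and "p \<ge> 1"
  shows "\<exists>c::real. \<forall>(n::nat) (w::nat \<Rightarrow> real) (A::nat set).
     (\<forall>i<n. w i \<ge> 1) \<longrightarrow> A \<subset> {..<n} \<longrightarrow> card A = k \<longrightarrow>
     (\<exists>B \<in> sets (site_space n :: (nat \<Rightarrow> real ^ 'd::finite) measure).
        {x \<in> space (site_space n :: (nat \<Rightarrow> real ^ 'd) measure). relevant p n w x A} \<subseteq> B \<and>
        measure (site_space n :: (nat \<Rightarrow> real ^ 'd) measure) B
          \<le> c * (\<Prod>i\<in>A. w i) / (\<Sum>i\<in>{..<n} - A. w i) ^ (k - 1))"
proof (intro exI allI impI)
  fix n :: nat and w :: "nat \<Rightarrow> real" and A :: "nat set"
  assume "\<forall>i<n. 1 \<le> w i" "A \<subset> {..<n}" "card A = k"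
  then show "\<exists>B \<in> sets (site_space n :: (nat \<Rightarrow> real ^ 'd) measure).
      {x \<in> space (site_space n :: (nat \<Rightarrow> real ^ 'd) measure). relevant p n w x A} \<subseteq> B \<and>
      measure (site_space n :: (nat \<Rightarrow> real ^ 'd) measure) B
        \<le> (96 * real CARD('d)) ^ (CARD('d) * k) * (2 * real k ^ k + 1) * (\<Prod>i\<in>A. w i)
          / (\<Sum>i\<in>{..<n} - A. w i) ^ (k - 1)"
    by (rule measure_relevant_le[OF assms(2)]) (use assms(1) in simp)
qed

end
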